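(* Let $P$ be a finite lattice and $R,R'\in\mathrm{Tr}(P)$ with $\chi^R=\chi^{R'}$. Then $\chi^{R\vee R'}=\chi^R=\chi^{R'}$, where $R\vee R'$ is the join in $\mathrm{Tr}(P)$.
   Context: For a finite lattice $(P,\le)$, a transfer system on $P$ is a partial order $R$ on $P$ refining $\le$ that is closed under restriction: if $x\,R\,z$ and $y\le z$ then $(x\wedge y)\,R\,y$. $\mathrm{Tr}(P)$ is the lattice of transfer systems ordered by inclusion of relations; the join $R\vee R'$ is the smallest transfer system containing both. For $R\in\mathrm{Tr}(P)$ and $x\in P$, $\chi^R(x)$ denotes the least element of $\{y\in P: y\,R\,x\}$ (which exists). *)

theory Defs
  imports Main
begin

text \<open>Transfer systems on a finite lattice P (the carrier is the whole type 'a).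
  A relation is a set of pairs; (x, y) \<in> R means x R y.\<close>

definition transfer_system :: "('a::{finite,lattice} \<times> 'a) set \<Rightarrow> bool" where
  "transfer_system R \<longleftrightarrow>
     refl R \<and> antisym R \<and> trans R \<and>
     R \<subseteq> {(x, y). x \<le> y} \<and>
     (\<forall>x y z. (x, z) \<in> R \<longrightarrow> y \<le> z \<longrightarrow> (inf x y, y) \<in> R)"

definition tr_join :: "('a::{finite,lattice} \<times> 'a) set \<Rightarrow> ('a \<times> 'a) set \<Rightarrow> ('a \<times> 'a) set" where
  "tr_join R R' = \<Inter> {T. transfer_system T \<and> R \<union> R' \<subseteq> T}"

definition chi :: "('a::{finite,lattice} \<times> 'a) set \<Rightarrow> 'a \<Rightarrow> 'a" where
  "chi R x = (LEAST y. (y, x) \<in> R)"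

end

theory Submission
  imports Defs
begin

text \<open>Since R and R' have the same \<open>\<chi>\<close>, both are contained in the relation
  "\<open>x \<le> y\<close> and \<open>\<chi>\<^sup>R x = \<chi>\<^sup>R y\<close>", which is itself a transfer system; hence so is
  their join. Any relation sandwiched between R and this relation has the same
  least-element function \<open>\<chi>\<close> as R.\<close>

lemma finite_inf_closed_has_least:
  fixes S :: "'a::lattice set"
  assumes "finite S" "S \<noteq> {}" "\<And>a b. a \<in> S \<Longrightarrow> b \<in> S \<Longrightarrow> inf a b \<in> S"
  shows "\<exists>m\<in>S. \<forall>y\<in>S. m \<le> y"
proof -
  obtain m where m: "m \<in> S" "\<forall>b\<in>S. b \<le> m \<longrightarrow> m = b"
    using finite_has_minimal[OF assms(1,2)] by blast
  have "m \<le> y" if "y \<in> S" for y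
  proof -
    have "inf m y \<in> S" using assms(3) m(1) that by blast
    then have "m = inf m y" using m(2) by simp
    then show ?thesis by (metis inf.cobounded2)
  qed
  then show ?thesis using m(1) by blast
qed

context
  fixes R :: "('a::{finite,lattice} \<times> 'a) set"
  assumes R: "transfer_system R"
begin

lemma transfer_system_le: "(x, y) \<in> R \<Longrightarrow> x \<le> y"
  using R unfolding transfer_system_def by auto

lemma transfer_system_restrict: "(x, z) \<in> R \<Longrightarrow> y \<le> z \<Longrightarrow> (inf x y, y) \<in> R"
  using R unfolding transfer_system_def by blast

lemma transfer_system_trans: "(x, y) \<in> R \<Longrightarrow> (y, z) \<in> R \<Longrightarrow> (x, z) \<in> R"
  using R unfolding transfer_system_def by (meson transD)

lemma transfer_system_restrict_between:
  assumes "(a, c) \<in> R" "a \<le> b" "b \<le> c"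
  shows "(a, b) \<in> R"
  using transfer_system_restrict[OF assms(1,3)] assms(2) by (simp add: inf.absorb1)

lemma chi_least_element: "(chi R x, x) \<in> R \<and> (\<forall>y. (y, x) \<in> R \<longrightarrow> chi R x \<le> y)"
proof -
  let ?S = "{y. (y, x) \<in> R}"
  have "?S \<noteq> {}"
    using R unfolding transfer_system_def by (auto simp: refl_on_def)
  moreover have "inf a b \<in> ?S" if "a \<in> ?S" "b \<in> ?S" for a b
    using that transfer_system_restrict transfer_system_trans transfer_system_le by blast
  ultimately obtain m where "m \<in> ?S" "\<forall>y\<in>?S. m \<le> y"
    using finite_inf_closed_has_least[of ?S] by auto
  moreover have "chi R x = m"
    unfolding chi_def by (rule Least_equality) (use calculation in auto)
  ultimately show ?thesis by auto
qed

lemma chi_in: "(chi R x, x) \<in> R"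
  using chi_least_element by blast

lemma chi_le: "(y, x) \<in> R \<Longrightarrow> chi R x \<le> y"
  using chi_least_element by blast

lemma chi_le_self: "chi R x \<le> x"
  using transfer_system_le[OF chi_in] .

lemma chi_eq_if_related:
  assumes ab: "(a, b) \<in> R"
  shows "chi R a = chi R b"
proof (rule antisym)
  have "(inf (chi R b) a, a) \<in> R"
    using transfer_system_restrict[OF chi_in transfer_system_le[OF ab]] .
  then show "chi R a \<le> chi R b"
    using chi_le by (meson inf.boundedE)
  show "chi R b \<le> chi R a"
    using chi_le transfer_system_trans[OF chi_in ab] by blast
qed

end

definition chi_kernel :: "('a::{finite,lattice} \<times> 'a) set \<Rightarrow> ('a \<times> 'a) set" where
  "chi_kernel R = {(x, y). x \<le> y \<and> chi R x = chi R y}"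

lemma subset_chi_kernel:
  assumes "transfer_system R"
  shows "R \<subseteq> chi_kernel R"
  using transfer_system_le[OF assms] chi_eq_if_related[OF assms]
  unfolding chi_kernel_def by auto

lemma transfer_system_chi_kernel:
  assumes R: "transfer_system R"
  shows "transfer_system (chi_kernel R)"
  unfolding transfer_system_def
proof (intro conjI allI impI)
  show "refl (chi_kernel R)" "antisym (chi_kernel R)" "trans (chi_kernel R)"
    "chi_kernel R \<subseteq> {(x, y). x \<le> y}"
    unfolding chi_kernel_def refl_on_def antisym_def trans_def by auto
next
  fix x y z assume xz: "(x, z) \<in> chi_kernel R" and yz: "y \<le> z"
  let ?c = "chi R z"
  \<comment> \<open>Both \<open>y\<close> and \<open>inf x y\<close> are reached by R from \<open>inf ?c y\<close>, since \<open>?c = \<chi>\<^sup>R x \<le> x\<close>.\<close>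
  have "?c \<le> x"
    using xz chi_le_self[OF R, of x] unfolding chi_kernel_def by simp
  have to_y: "(inf ?c y, y) \<in> R"
    using transfer_system_restrict[OF R chi_in[OF R] yz] .
  have "(inf ?c y, inf x y) \<in> R"
  proof (rule transfer_system_restrict_between[OF R to_y])
    show "inf ?c y \<le> inf x y" using \<open>?c \<le> x\<close> by (simp add: inf.coboundedI1)
  qed simp
  then have "chi R (inf x y) = chi R y"
    using chi_eq_if_related[OF R] to_y by metis
  then show "(inf x y, y) \<in> chi_kernel R"
    unfolding chi_kernel_def by simp
qed

lemma chi_eq_if_between_chi_kernel:
  assumes R: "transfer_system R" and "R \<subseteq> S" "S \<subseteq> chi_kernel R"
  shows "chi S = chi R"
proof
  fix x
  show "chi S x = chi R x"
    unfolding chi_def[of S]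
  proof (rule Least_equality)
    show "(chi R x, x) \<in> S" using chi_in[OF R] assms(2) by blast
  next
    fix y assume "(y, x) \<in> S"
    then have "chi R y = chi R x" using assms(3) unfolding chi_kernel_def by blast
    then show "chi R x \<le> y" using chi_le_self[OF R, of y] by simp
  qed
qed

lemma tr_join_upper: "R \<union> R' \<subseteq> tr_join R R'"
  unfolding tr_join_def by blast

lemma tr_join_least: "transfer_system T \<Longrightarrow> R \<union> R' \<subseteq> T \<Longrightarrow> tr_join R R' \<subseteq> T"
  unfolding tr_join_def by blast

theorem lemma2p8:
  fixes R R' :: "('a::{finite,lattice} \<times> 'a) set"
  assumes "transfer_system R" and "transfer_system R'"
    and "chi R = chi R'"
  shows "chi (tr_join R R') = chi R \<and> chi (tr_join R R') = chi R'"
proof -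
  have "chi_kernel R' = chi_kernel R"
    using assms(3) unfolding chi_kernel_def by simp
  then have "R \<union> R' \<subseteq> chi_kernel R"
    using subset_chi_kernel[OF assms(1)] subset_chi_kernel[OF assms(2)] by auto
  then have "tr_join R R' \<subseteq> chi_kernel R"
    using tr_join_least transfer_system_chi_kernel[OF assms(1)] by blast
  then have "chi (tr_join R R') = chi R"
    using chi_eq_if_between_chi_kernel[OF assms(1)] tr_join_upper by blast
  then show ?thesis using assms(3) by simp
qed

end
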